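(* Let $q=r^2$ where $r$ is an odd prime power, and let $q-1=e_1f_1=e_2f_2$ with positive integers $e_1,f_1,e_2,f_2$. Suppose there is an integer $l\geq 2$ with $e_1\equiv 2^l \pmod{2^{l+1}}$ and $2^l\mid e_2$. Suppose further that $2e_2\mid e_1(r-1)$ and $e_1\mid e_2(r+1)$. Let $D_1=\frac{e_1}{\gcd(e_1,e_2)}$, $D_2=\frac{e_2}{\gcd(e_1,e_2)}$, and let $s,t$ be integers with $1\leq s\leq D_1$, $1\leq t\leq D_2$ and $4\mid (s-1)(r+1)$. Put $n_1=sf_1+tf_2$. Then: (1) if $n_1$ is even, there exists a $q$-ary MDS self-dual code of length $n_1$; (2) if $n_1$ is odd, there exists a $q$-ary MDS self-dual code of length $n_1+1$; (3) if $n_1$ is even, there exists a $q$-ary MDS self-dual code of length $n_1+2$.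
   Context: $\mathbb{F}_q$ denotes the finite field with $q$ elements. A linear code of length $n$ over $\mathbb{F}_q$ is a subspace of $\mathbb{F}_q^n$; an $[n,k,d]$ code has dimension $k$ and minimum Hamming distance $d$, and it is MDS if $d=n-k+1$. The (Euclidean) dual of a code $C$ is $C^\perp=\{x\in\mathbb{F}_q^n : \sum_i x_ic_i=0 \text{ for all } c\in C\}$; $C$ is self-dual if $C=C^\perp$. A $q$-ary MDS self-dual code of length $n$ is a linear code over $\mathbb{F}_q$ of length $n$ that is both MDS and self-dual. *)

theory Defs
  imports Complex_Main "HOL-Library.Function_Algebras" "HOL-Library.Cardinality" "HOL-Computational_Algebra.Primes"
    "HOL-Number_Theory.Cong"
begin

text \<open>Vectors of length n over a field are modelled as functions nat => 'a that vanish
  outside {0..<n}; F_q^n is the set fvec n.\<close>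

definition fvec :: "nat \<Rightarrow> (nat \<Rightarrow> 'a::zero) set" where
  "fvec n = {v. \<forall>i\<ge>n. v i = 0}"

definition vscale :: "'a::field \<Rightarrow> (nat \<Rightarrow> 'a) \<Rightarrow> (nat \<Rightarrow> 'a)" where
  "vscale c v = (\<lambda>i. c * v i)"

definition linear_code :: "nat \<Rightarrow> (nat \<Rightarrow> 'a::field) set \<Rightarrow> bool" where
  "linear_code n C \<longleftrightarrow> C \<subseteq> fvec n \<and> module.subspace vscale C"

definition code_dim :: "(nat \<Rightarrow> 'a::field) set \<Rightarrow> nat" where
  "code_dim C = vector_space.dim vscale C"

definition hamming_dist :: "nat \<Rightarrow> (nat \<Rightarrow> 'a) \<Rightarrow> (nat \<Rightarrow> 'a) \<Rightarrow> nat" where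
  "hamming_dist n x y = card {i. i < n \<and> x i \<noteq> y i}"

definition min_dist :: "nat \<Rightarrow> (nat \<Rightarrow> 'a) set \<Rightarrow> nat" where
  "min_dist n C = Min {hamming_dist n x y | x y. x \<in> C \<and> y \<in> C \<and> x \<noteq> y}"

definition dual_code :: "nat \<Rightarrow> (nat \<Rightarrow> 'a::field) set \<Rightarrow> (nat \<Rightarrow> 'a) set" where
  "dual_code n C = {x \<in> fvec n. \<forall>c\<in>C. (\<Sum>i<n. x i * c i) = 0}"

definition is_MDS :: "nat \<Rightarrow> (nat \<Rightarrow> 'a::field) set \<Rightarrow> bool" where
  "is_MDS n C \<longleftrightarrow> linear_code n C \<and> min_dist n C = n - code_dim C + 1"

definition self_dual :: "nat \<Rightarrow> (nat \<Rightarrow> 'a::field) set \<Rightarrow> bool" where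
  "self_dual n C \<longleftrightarrow> linear_code n C \<and> C = dual_code n C"

definition MDS_self_dual :: "nat \<Rightarrow> (nat \<Rightarrow> 'a::field) set \<Rightarrow> bool" where
  "MDS_self_dual n C \<longleftrightarrow> is_MDS n C \<and> self_dual n C"

end

theory Submission
  imports Defs "HOL-Computational_Algebra.Polynomial" "HOL-Number_Theory.Residues"
begin

(* Let q = r^2, let w generate the multiplicative group of F_q, and let eta x = x^((q-1)/2) be
   the quadratic character.  A generalized Reed-Solomon code of even length n with evaluation set
   A is MDS, and it can be made self-dual as soon as lam * prod_{b in A, b ~= a} (a - b) is a
   nonzero square for every a in A, for one fixed lam ~= 0.

   A is a union of s cosets of the subgroup of index e1 and t cosets of the subgroup of index e2.
   The product of x - b over a coset is x^f - c, so prod_{b ~= a} (a - b) splits, up to squares,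
   into differences of f1-th powers, which lie in the group of norm-one elements of order r + 1,
   and differences of f2-th powers, which lie in F_r and are therefore squares.  For distinct
   y, z of norm one, eta (y - z) = (-1)^((r+1)/2) (y z)^(-(r+1)/2), and the divisibility
   hypotheses make these signs cancel.  Adjoining 0 preserves the square condition (length
   n1 + 1), and so does the Moebius map x -> 1/(x - c) for a point c outside A and 0, which adds
   one more point (length n1 + 2). *)

hide_const (open) UnivPoly.coeff UnivPoly.monom Module.smult

section \<open>Generalized Reed--Solomon codes\<close>

lemma vector_space_vscale: "vector_space (vscale :: 'a::field \<Rightarrow> (nat \<Rightarrow> 'a) \<Rightarrow> (nat \<Rightarrow> 'a))"
  by unfold_locales (auto simp: vscale_def fun_eq_iff algebra_simps)

interpretation vs: vector_space "vscale :: 'a::field \<Rightarrow> (nat \<Rightarrow> 'a) \<Rightarrow> (nat \<Rightarrow> 'a)"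
  by (rule vector_space_vscale)

lemma sum_fun_apply: "(\<Sum>j\<in>A. f j) x = (\<Sum>j\<in>A. f j x :: 'b::comm_monoid_add)"
  by (induct A rule: infinite_finite_induct) auto

lemma hamming_dist_le: "hamming_dist n x y \<le> n"
proof -
  have "card {i. i < n \<and> x i \<noteq> y i} \<le> card {..<n}" by (intro card_mono) auto
  then show ?thesis by (simp add: hamming_dist_def)
qed

lemma min_dist_eqI:
  assumes lower: "\<And>x y. x \<in> C \<Longrightarrow> y \<in> C \<Longrightarrow> x \<noteq> y \<Longrightarrow> d \<le> hamming_dist n x y"
    and witness: "x \<in> C" "y \<in> C" "x \<noteq> y" "hamming_dist n x y = d"
  shows "min_dist n C = d"
proof -
  let ?D = "{hamming_dist n x y | x y. x \<in> C \<and> y \<in> C \<and> x \<noteq> y}"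
  have "finite ?D" by (rule finite_subset[of _ "{..n}"]) (auto simp: hamming_dist_le)
  moreover have "d \<in> ?D" using witness by blast
  ultimately show ?thesis unfolding min_dist_def using lower by (intro Min_eqI) auto
qed

lemma poly_eq_sum_coeffs_below:
  fixes f :: "'a::comm_ring_1 poly"
  assumes "degree f < k"
  shows "poly f x = (\<Sum>j<k. coeff f j * x ^ j)"
proof -
  have "poly f x = (\<Sum>i\<le>degree f. coeff f i * x ^ i)" by (rule poly_altdef)
  also have "\<dots> = (\<Sum>j<k. coeff f j * x ^ j)"
    by (rule sum.mono_neutral_left) (use assms in \<open>auto simp: coeff_eq_0\<close>)
  finally show ?thesis .
qed

definition lagrange_denom :: "(nat \<Rightarrow> 'a::field) \<Rightarrow> nat \<Rightarrow> nat \<Rightarrow> 'a" where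
  "lagrange_denom a n i = (\<Prod>j\<in>{..<n}-{i}. a i - a j)"

definition lagrange_basis :: "(nat \<Rightarrow> 'a::field) \<Rightarrow> nat \<Rightarrow> nat \<Rightarrow> 'a poly" where
  "lagrange_basis a n i = (\<Prod>j\<in>{..<n}-{i}. [:- a j, 1:])"

definition lagrange_interp :: "(nat \<Rightarrow> 'a::field) \<Rightarrow> nat \<Rightarrow> (nat \<Rightarrow> 'a) \<Rightarrow> 'a poly" where
  "lagrange_interp a n y = (\<Sum>i<n. smult (y i / lagrange_denom a n i) (lagrange_basis a n i))"

lemma lagrange_denom_nonzero: "inj_on a {..<n} \<Longrightarrow> i < n \<Longrightarrow> lagrange_denom a n i \<noteq> 0"
  unfolding lagrange_denom_def by (auto simp: inj_on_def)

lemma poly_lagrange_basis: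
  "i < n \<Longrightarrow> j < n \<Longrightarrow> poly (lagrange_basis a n i) (a j) = (if j = i then lagrange_denom a n i else 0)"
  unfolding lagrange_basis_def lagrange_denom_def poly_prod by (auto intro!: prod.cong)

lemma degree_lagrange_basis: "i < n \<Longrightarrow> degree (lagrange_basis a n i) = n - 1"
  unfolding lagrange_basis_def by (subst degree_prod_eq_sum_degree) auto

lemma coeff_lagrange_basis_top: "i < n \<Longrightarrow> coeff (lagrange_basis a n i) (n - 1) = 1"
  using lead_coeff_prod[of "\<lambda>j. [:- a j, 1:]" "{..<n}-{i}"] degree_lagrange_basis[of i n a]
  by (simp add: lagrange_basis_def)

lemma degree_lagrange_interp: "degree (lagrange_interp a n y) \<le> n - 1"
  unfolding lagrange_interp_def
  by (rule degree_sum_le) (auto intro: order.trans[OF degree_smult_le] simp: degree_lagrange_basis)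

lemma poly_lagrange_interp:
  assumes "inj_on a {..<n}" "j < n"
  shows "poly (lagrange_interp a n y) (a j) = y j"
proof -
  have "poly (lagrange_interp a n y) (a j)
      = (\<Sum>i<n. y i / lagrange_denom a n i * (if j = i then lagrange_denom a n i else 0))"
    unfolding lagrange_interp_def poly_sum poly_smult using assms(2)
    by (auto simp: poly_lagrange_basis intro!: sum.cong)
  also have "\<dots> = (\<Sum>i<n. if i = j then y j else 0)"
    by (rule sum.cong) (use lagrange_denom_nonzero[OF assms(1)] in auto)
  finally show ?thesis using assms(2) by simp
qed

lemma coeff_lagrange_interp_top:
  "coeff (lagrange_interp a n y) (n - 1) = (\<Sum>i<n. y i / lagrange_denom a n i)"
  unfolding lagrange_interp_def coeff_sum coeff_smult
  by (intro sum.cong refl) (simp add: coeff_lagrange_basis_top[simplified])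

lemma lagrange_interp_poly:
  assumes "inj_on a {..<n}" "degree f < n"
  shows "lagrange_interp a n (\<lambda>i. poly f (a i)) = f"
proof (rule poly_eqI_degree[of "a ` {..<n}"])
  have "card (a ` {..<n}) = n" using assms(1) by (simp add: card_image)
  moreover have "degree (lagrange_interp a n (\<lambda>i. poly f (a i))) \<le> n - 1"
    by (rule degree_lagrange_interp)
  ultimately show "degree (lagrange_interp a n (\<lambda>i. poly f (a i))) < card (a ` {..<n})"
    "degree f < card (a ` {..<n})"
    using assms(2) by linarith+
qed (use assms(1) poly_lagrange_interp in auto)

corollary coeff_top_eq_sum_values:
  assumes "inj_on a {..<n}" "degree f < n"
  shows "coeff f (n - 1) = (\<Sum>i<n. poly f (a i) / lagrange_denom a n i)"
  using coeff_lagrange_interp_top[of a n "\<lambda>i. poly f (a i)"] lagrange_interp_poly[OF assms] by simp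

locale self_dual_grs =
  fixes n k :: nat and a v :: "nat \<Rightarrow> 'a::field" and lam :: 'a
  assumes n_eq: "n = 2 * k" and k_pos: "1 \<le> k" and inj: "inj_on a {..<n}"
    and v_nonzero: "\<And>i. i < n \<Longrightarrow> v i \<noteq> 0" and lam_nonzero: "lam \<noteq> 0"
    and v_square: "\<And>i. i < n \<Longrightarrow> v i ^ 2 * lagrange_denom a n i = lam"
begin

definition word :: "'a poly \<Rightarrow> nat \<Rightarrow> 'a" where
  "word f = (\<lambda>i. if i < n then v i * poly f (a i) else 0)"

definition code :: "(nat \<Rightarrow> 'a) set" where
  "code = word ` {f. degree f < k}"

lemma k_less_n: "k < n"
  using n_eq k_pos by simp

lemma word_add: "word (f + g) = word f + word g"
  by (auto simp: word_def fun_eq_iff algebra_simps)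

lemma word_smult: "word (smult c f) = vscale c (word f)"
  by (auto simp: word_def fun_eq_iff vscale_def algebra_simps)

lemma word_0: "word 0 = 0"
  by (auto simp: word_def fun_eq_iff)

lemma word_sum: "word (\<Sum>j\<in>A. f j) = (\<Sum>j\<in>A. word (f j))"
  by (induct A rule: infinite_finite_induct) (auto simp: word_0 word_add)

lemma word_inj:
  assumes "degree f < n" "degree g < n" "word f = word g"
  shows "f = g"
proof -
  have "poly f (a j) = poly g (a j)" if "j < n" for j
    using fun_cong[OF assms(3), of j] that v_nonzero[OF that] by (auto simp: word_def)
  moreover have "card (a ` {..<n}) = n" using inj by (simp add: card_image)
  ultimately show ?thesis using assms(1,2) by (intro poly_eqI_degree[of "a ` {..<n}"]) auto
qed

lemma code_subset_fvec: "code \<subseteq> fvec n"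
  by (auto simp: code_def word_def fvec_def)

lemma linear_code: "linear_code n code"
  unfolding linear_code_def vs.subspace_def
proof (intro conjI ballI allI code_subset_fvec)
  show "0 \<in> code" unfolding code_def using word_0 k_pos by (intro image_eqI[of _ _ 0]) auto
next
  fix x y assume "x \<in> code" "y \<in> code"
  then obtain f g where "x = word f" "y = word g" "degree f < k" "degree g < k"
    by (auto simp: code_def)
  then show "x + y \<in> code" unfolding code_def
    by (intro image_eqI[of _ _ "f + g"]) (auto simp: word_add intro: le_less_trans[OF degree_add_le_max])
next
  fix c x assume "x \<in> code"
  then obtain f where "x = word f" "degree f < k" by (auto simp: code_def)
  then show "vscale c x \<in> code" unfolding code_def
    by (intro image_eqI[of _ _ "smult c f"]) (auto simp: word_smult intro: le_less_trans[OF degree_smult_le])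
qed

text \<open>The normalisation of \<open>v\<close> turns the inner product of two codewords into \<open>lam\<close> times a
  Lagrange interpolation sum, which is the coefficient of \<open>x\<^sup>n\<^sup>-\<^sup>1\<close> in the product polynomial.\<close>

lemma inner_word:
  assumes "degree (f * g) < n"
  shows "(\<Sum>i<n. word f i * word g i) = lam * coeff (f * g) (n - 1)"
proof -
  have "word f i * word g i = lam * (poly (f * g) (a i) / lagrange_denom a n i)" if i: "i < n" for i
  proof -
    have "v i * v i = lam / lagrange_denom a n i"
      using v_square[OF i] lagrange_denom_nonzero[OF inj i] by (simp add: field_simps power2_eq_square)
    moreover have "word f i * word g i = (v i * v i) * poly (f * g) (a i)"
      using i by (simp add: word_def algebra_simps)
    ultimately show ?thesis by simp
  qed
  then have "(\<Sum>i<n. word f i * word g i) = lam * (\<Sum>i<n. poly (f * g) (a i) / lagrange_denom a n i)"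
    by (simp add: sum_distrib_left)
  then show ?thesis using coeff_top_eq_sum_values[OF inj assms] by simp
qed

lemma code_subset_dual: "code \<subseteq> dual_code n code"
proof
  fix x assume x: "x \<in> code"
  then obtain f where f: "x = word f" "degree f < k" by (auto simp: code_def)
  have "(\<Sum>i<n. x i * c i) = 0" if "c \<in> code" for c
  proof -
    obtain g where g: "c = word g" "degree g < k" using \<open>c \<in> code\<close> by (auto simp: code_def)
    have "degree (f * g) < n - 1"
      using degree_mult_le[of f g] f g n_eq by linarith
    then show ?thesis using inner_word[of f g] f g by (simp add: coeff_eq_0)
  qed
  then show "x \<in> dual_code n code" using x code_subset_fvec by (auto simp: dual_code_def)
qed

lemma dual_subset_code: "dual_code n code \<subseteq> code"
proof
  fix x assume "x \<in> dual_code n code"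
  then have x: "x \<in> fvec n" and orth: "\<And>c. c \<in> code \<Longrightarrow> (\<Sum>i<n. x i * c i) = 0"
    by (auto simp: dual_code_def)
  define F where "F = lagrange_interp a n (\<lambda>j. x j / v j)"
  have "degree F \<le> n - 1" unfolding F_def by (rule degree_lagrange_interp)
  with k_less_n have dF: "degree F < n" by linarith
  have x_eq: "x = word F"
    using x v_nonzero poly_lagrange_interp[OF inj] by (auto simp: fun_eq_iff word_def fvec_def F_def)
  have "degree F < k"
  proof (rule ccontr)
    assume "\<not> degree F < k"
    then have F0: "F \<noteq> 0" and dk: "degree F \<ge> k" using k_pos by auto
    \<comment> \<open>pairing with the codeword of \<open>x ^ (n - 1 - degree F)\<close> isolates the leading coefficient of \<open>F\<close>\<close>
    define g :: "'a poly" where "g = monom 1 (n - 1 - degree F)"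
    have dg: "degree g = n - 1 - degree F" by (simp add: g_def degree_monom_eq)
    then have "degree g < k" using dk dF n_eq by linarith
    then have "word g \<in> code" by (auto simp: code_def)
    then have "(\<Sum>i<n. word F i * word g i) = 0" using orth x_eq by simp
    moreover have dFg: "degree (F * g) = n - 1"
      using dF dg F0 by (simp add: degree_mult_eq g_def)
    ultimately have "lam * coeff (F * g) (n - 1) = 0" using inner_word[of F g] k_less_n by simp
    moreover have "coeff (F * g) (n - 1) = lead_coeff F"
    proof -
      have "coeff (F * g) (n - 1) = coeff (monom 1 (n - 1 - degree F) * F) (n - 1)"
        by (simp add: g_def mult.commute)
      also have "\<dots> = coeff F ((n - 1) - (n - 1 - degree F))"
        by (simp add: coeff_monom_mult)
      also have "(n - 1) - (n - 1 - degree F) = degree F" using dF by arith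
      finally show ?thesis .
    qed
    ultimately show False using lam_nonzero F0 by simp
  qed
  then show "x \<in> code" unfolding code_def using x_eq by auto
qed

definition basis_word :: "nat \<Rightarrow> nat \<Rightarrow> 'a" where
  "basis_word j = word (monom 1 j)"

lemma inj_on_basis_word: "inj_on basis_word {..<k}"
proof
  fix i j assume "i \<in> {..<k}" "j \<in> {..<k}" "basis_word i = basis_word j"
  then have "monom (1::'a) i = monom 1 j"
    using k_less_n by (intro word_inj) (auto simp: basis_word_def degree_monom_eq)
  then show "i = j" by (simp add: monom_eq_iff')
qed

lemma word_eq_sum_basis:
  assumes "degree f < k"
  shows "word f = (\<Sum>j<k. vscale (coeff f j) (basis_word j))"
proof
  fix i
  show "word f i = (\<Sum>j<k. vscale (coeff f j) (basis_word j)) i"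
    using poly_eq_sum_coeffs_below[OF assms, of "a i"]
    by (simp add: sum_fun_apply word_def vscale_def basis_word_def poly_monom sum_distrib_left algebra_simps)
qed

lemma code_dim: "code_dim code = k"
  unfolding code_dim_def
proof (rule vs.dim_unique[of "basis_word ` {..<k}"])
  show "basis_word ` {..<k} \<subseteq> code" by (auto simp: code_def basis_word_def degree_monom_eq)
  show "code \<subseteq> vs.span (basis_word ` {..<k})"
  proof
    fix x assume "x \<in> code"
    then obtain f where f: "x = word f" "degree f < k" by (auto simp: code_def)
    show "x \<in> vs.span (basis_word ` {..<k})"
      unfolding f(1) word_eq_sum_basis[OF f(2)] by (intro vs.span_sum vs.span_scale vs.span_base) auto
  qed
  show "vs.independent (basis_word ` {..<k})"
  proof (rule vs.independent_if_scalars_zero)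
    fix c x assume sum0: "(\<Sum>x\<in>basis_word ` {..<k}. vscale (c x) x) = 0"
      and x: "x \<in> basis_word ` {..<k}"
    define P where "P = (\<Sum>j<k. monom (c (basis_word j)) j)"
    have "word P = (\<Sum>j<k. vscale (c (basis_word j)) (basis_word j))"
      unfolding P_def word_sum basis_word_def
      by (intro sum.cong refl) (metis word_smult smult_monom mult.right_neutral)
    also have "\<dots> = word 0"
      using sum0 by (simp add: sum.reindex[OF inj_on_basis_word] word_0)
    finally have "word P = word 0" .
    moreover have "degree P < n" unfolding P_def using k_less_n
      by (intro le_less_trans[OF degree_sum_le]) (auto intro: order.trans[OF degree_monom_le])
    ultimately have "P = 0" using k_less_n by (intro word_inj) auto
    moreover obtain j where "j < k" "x = basis_word j" using x by auto
    moreover have "coeff P j = c (basis_word j)" if "j < k" for j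
      using that by (simp add: P_def coeff_sum)
    ultimately show "c x = 0" by auto
  qed simp
  show "card (basis_word ` {..<k}) = k" using inj_on_basis_word by (simp add: card_image)
qed

lemma hamming_dist_word:
  "hamming_dist n (word f) (word g) = card {i. i < n \<and> poly (f - g) (a i) \<noteq> 0}"
  unfolding hamming_dist_def by (rule arg_cong[where f=card]) (auto simp: word_def v_nonzero)

lemma card_nonroots_ge:
  assumes "h \<noteq> 0" "degree h < k"
  shows "n - k + 1 \<le> card {i. i < n \<and> poly h (a i) \<noteq> 0}"
proof -
  let ?Z = "{i. i < n \<and> poly h (a i) = 0}" and ?W = "{i. i < n \<and> poly h (a i) \<noteq> 0}"
  have "inj_on a ?Z" by (rule inj_on_subset[OF inj]) auto
  then have "card ?Z = card (a ` ?Z)" by (rule card_image[symmetric])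
  also have "\<dots> \<le> card {x. poly h x = 0}" by (intro card_mono poly_roots_finite[OF assms(1)]) auto
  also have "\<dots> \<le> degree h" by (rule card_poly_roots_bound[OF assms(1)])
  finally have "card ?Z < k" using assms(2) by simp
  moreover have "card (?Z \<union> ?W) = card ?Z + card ?W" by (rule card_Un_disjoint) auto
  moreover have "?Z \<union> ?W = {..<n}" by auto
  ultimately have "card ?Z + card ?W = n" by simp
  then show ?thesis using \<open>card ?Z < k\<close> k_less_n by linarith
qed

lemma min_dist: "min_dist n code = n - k + 1"
proof (rule min_dist_eqI)
  fix x y assume "x \<in> code" "y \<in> code" "x \<noteq> y"
  then obtain f g where "x = word f" "y = word g" "degree f < k" "degree g < k" "f \<noteq> g"
    by (auto simp: code_def)
  then show "n - k + 1 \<le> hamming_dist n x y"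
    using card_nonroots_ge[of "f - g"] degree_diff_le_max[of f g] by (simp add: hamming_dist_word)
next
  \<comment> \<open>a polynomial of degree \<open>k - 1\<close> vanishing at the first \<open>k - 1\<close> points attains the bound\<close>
  define f where "f = (\<Prod>j<k-1. [:- a j, 1:])"
  have df: "degree f = k - 1" unfolding f_def by (subst degree_prod_eq_sum_degree) auto
  then show "word f \<in> code" "word 0 \<in> code" using k_pos by (auto simp: code_def)
  have "f \<noteq> 0" unfolding f_def by (auto simp: prod_zero_iff)
  moreover have "degree f < n" using df k_less_n by simp
  ultimately show "word f \<noteq> word 0" using word_inj[of f 0] by auto
  have "poly f (a i) = 0 \<longleftrightarrow> i < k - 1" if "i < n" for i
  proof -
    have "poly f (a i) = 0 \<longleftrightarrow> (\<exists>j<k-1. a i = a j)" unfolding f_def poly_prod by auto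
    also have "\<dots> \<longleftrightarrow> i < k - 1"
    proof
      assume "\<exists>j<k-1. a i = a j"
      then obtain j where "j < k - 1" "a i = a j" by blast
      moreover have "j < n" using \<open>j < k - 1\<close> k_less_n by simp
      ultimately show "i < k - 1" using inj_onD[OF inj, of i j] that by simp
    qed auto
    finally show ?thesis .
  qed
  then have "{i. i < n \<and> poly (f - 0) (a i) \<noteq> 0} = {k-1..<n}" by auto
  then show "hamming_dist n (word f) (word 0) = n - k + 1"
    using k_pos k_less_n by (simp add: hamming_dist_word)
qed

theorem MDS_self_dual: "MDS_self_dual n code"
  unfolding MDS_self_dual_def is_MDS_def self_dual_def
  using linear_code min_dist code_dim code_subset_dual dual_subset_code by auto

end

abbreviation diff_prod :: "'a::comm_ring_1 set \<Rightarrow> 'a \<Rightarrow> 'a" where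
  "diff_prod S s \<equiv> (\<Prod>b\<in>S-{s}. s - b)"

theorem MDS_self_dual_if_diff_prods_square:
  fixes S :: "'a::field set"
  assumes fin: "finite S" and card: "card S = n" and n: "even n" "n \<ge> 2" and lam: "lam \<noteq> 0"
    and square: "\<And>s. s \<in> S \<Longrightarrow> \<exists>y. y \<noteq> 0 \<and> y ^ 2 = lam * diff_prod S s"
  shows "\<exists>C :: (nat \<Rightarrow> 'a) set. MDS_self_dual n C"
proof -
  obtain a where a: "bij_betw a {..<n} S"
    using ex_bij_betw_nat_finite[OF fin] card by (auto simp: atLeast0LessThan)
  have inj: "inj_on a {..<n}" and aS: "a ` {..<n} = S" using a by (auto simp: bij_betw_def)
  have denom: "lagrange_denom a n i = diff_prod S (a i)" if "i < n" for i
  proof -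
    have "S - {a i} = a ` ({..<n} - {i})" using aS inj that by (auto simp: inj_on_def)
    then show ?thesis
      unfolding lagrange_denom_def by (simp add: prod.reindex inj_on_subset[OF inj])
  qed
  have "\<exists>u. u \<noteq> 0 \<and> u ^ 2 * lagrange_denom a n i = lam" if i: "i < n" for i
  proof -
    obtain y where y: "y \<noteq> 0" "y ^ 2 = lam * lagrange_denom a n i"
      using square[of "a i"] aS i denom[OF i] by auto
    then have "(lam / y) ^ 2 * lagrange_denom a n i = lam"
      using lam lagrange_denom_nonzero[OF inj i] by (simp add: power_divide field_simps power2_eq_square)
    then show ?thesis using y lam by (intro exI[of _ "lam / y"]) simp
  qed
  then obtain v where "\<And>i. i < n \<Longrightarrow> v i \<noteq> 0 \<and> v i ^ 2 * lagrange_denom a n i = lam" by metis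
  moreover obtain k where "n = 2 * k" using n by auto
  ultimately interpret self_dual_grs n k a v lam
    using n inj lam by unfold_locales auto
  show ?thesis using MDS_self_dual by blast
qed

lemma poly_pderiv_prod_at_root:
  fixes S :: "'a::field set"
  assumes "finite S" "a \<in> S"
  shows "poly (pderiv (\<Prod>b\<in>S. [:- b, 1:])) a = diff_prod S a"
proof -
  have "poly (pderiv (\<Prod>b\<in>S. [:- b, 1:])) a = (\<Sum>c\<in>S. \<Prod>b\<in>S-{c}. a - b)"
    by (simp add: pderiv_prod poly_sum poly_prod pderiv_pCons)
  also have "\<dots> = diff_prod S a + (\<Sum>c\<in>S-{a}. \<Prod>b\<in>S-{c}. a - b)"
    using assms by (simp add: sum.remove)
  also have "(\<Sum>c\<in>S-{a}. \<Prod>b\<in>S-{c}. a - b) = 0"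
    by (rule sum.neutral) (use assms in \<open>auto intro!: prod_zero\<close>)
  finally show ?thesis by simp
qed

lemma diff_prod_UN_disjoint:
  fixes T :: "'i \<Rightarrow> 'a::field set"
  assumes "finite K" "\<And>k. k \<in> K \<Longrightarrow> finite (T k)"
    and "\<And>k k'. k \<in> K \<Longrightarrow> k' \<in> K \<Longrightarrow> k \<noteq> k' \<Longrightarrow> T k \<inter> T k' = {}"
    and "k0 \<in> K" "a \<in> T k0"
  shows "diff_prod (\<Union>k\<in>K. T k) a = diff_prod (T k0) a * (\<Prod>k\<in>K-{k0}. \<Prod>b\<in>T k. a - b)"
proof -
  have "(\<Union>k\<in>K. T k) - {a} = (T k0 - {a}) \<union> (\<Union>k\<in>K-{k0}. T k)"
    using assms by blast
  moreover have "(T k0 - {a}) \<inter> (\<Union>k\<in>K-{k0}. T k) = {}" using assms by blast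
  ultimately have "diff_prod (\<Union>k\<in>K. T k) a = diff_prod (T k0) a * (\<Prod>b\<in>(\<Union>k\<in>K-{k0}. T k). a - b)"
    using assms by (simp add: prod.union_disjoint)
  also have "(\<Prod>b\<in>(\<Union>k\<in>K-{k0}. T k). a - b) = (\<Prod>k\<in>K-{k0}. \<Prod>b\<in>T k. a - b)"
    by (rule prod.UNION_disjoint) (use assms in auto)
  finally show ?thesis .
qed

section \<open>Finite fields\<close>

text \<open>The library proves cyclicity of the multiplicative group for fields in the sense of
  HOL-Algebra; a type-class field is viewed as one through \<open>field_ring\<close>.\<close>

definition field_ring :: "'a::field ring" where
  "field_ring = \<lparr>carrier = UNIV, monoid.mult = (*), one = 1, zero = 0, add = (+)\<rparr>"

lemma field_field_ring: "field (field_ring :: 'a::field ring)"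
proof -
  have "abelian_group (field_ring :: 'a ring)"
  proof (rule abelian_groupI)
    fix y :: 'a
    show "\<exists>x\<in>carrier field_ring. x \<oplus>\<^bsub>field_ring\<^esub> y = \<zero>\<^bsub>field_ring\<^esub>"
      by (rule bexI[of _ "- y"]) (simp_all add: field_ring_def)
  qed (simp_all add: field_ring_def ac_simps)
  moreover have "comm_monoid (field_ring :: 'a ring)"
    by (rule comm_monoidI) (simp_all add: field_ring_def ac_simps)
  ultimately have "cring (field_ring :: 'a ring)"
    by (rule cringI) (simp add: field_ring_def distrib_right)
  then show ?thesis
  proof (rule cring.cring_fieldI2)
    fix x :: 'a assume "x \<noteq> \<zero>\<^bsub>field_ring\<^esub>"
    then show "\<exists>y\<in>carrier field_ring. x \<otimes>\<^bsub>field_ring\<^esub> y = \<one>\<^bsub>field_ring\<^esub>"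
      by (intro bexI[of _ "inverse x"]) (simp_all add: field_ring_def)
  qed (simp add: field_ring_def)
qed

lemma field_ring_pow: "x [^]\<^bsub>(field_ring :: 'a::field ring)\<^esub> (n::nat) = x ^ n"
  by (induction n) (auto simp: field_ring_def)

lemma finite_field_mult_cyclic: "\<exists>w::'a::{finite,field}. \<forall>x. x \<noteq> 0 \<longrightarrow> (\<exists>i::nat. x = w ^ i)"
proof -
  have "finite (carrier (field_ring :: 'a ring))" by (simp add: field_ring_def)
  then obtain a where
      a: "carrier (mult_of (field_ring :: 'a ring)) = {a [^]\<^bsub>field_ring\<^esub> i | i::nat. i \<in> UNIV}"
    using field.finite_field_mult_group_has_gen[OF field_field_ring] by blast
  have "\<exists>i. x = a ^ i" if "x \<noteq> 0" for x :: 'a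
  proof -
    have "x \<in> carrier (mult_of (field_ring :: 'a ring))" using that by (simp add: field_ring_def)
    then show ?thesis unfolding a by (auto simp: field_ring_pow)
  qed
  then show ?thesis by blast
qed

section \<open>The field of order \<open>r\<^sup>2\<close>\<close>

locale square_order_field =
  fixes p m r :: nat and w :: "'a::{finite,field}"
  assumes prime_p: "prime p" and odd_p: "odd p" and m_pos: "m \<ge> 1" and r_eq: "r = p ^ m"
    and card_eq: "CARD('a) = r ^ 2"
    and w_generates: "\<And>x. x \<noteq> 0 \<Longrightarrow> \<exists>i. x = w ^ i"
begin

definition N :: nat where "N = r ^ 2 - 1"

text \<open>The quadratic character: by Euler's criterion, \<open>eta x = 1\<close> exactly for nonzero squares.\<close>

definition eta :: "'a \<Rightarrow> 'a" where "eta x = x ^ (N div 2)"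

lemma r_ge_3: "r \<ge> 3"
proof -
  have "p \<ge> 3" using prime_p odd_p prime_ge_2_nat[of p] by (cases "p = 2") auto
  moreover have "p \<le> p ^ m" using m_pos prime_gt_0_nat[OF prime_p] by (simp add: self_le_power)
  ultimately show ?thesis using r_eq by simp
qed

lemma odd_r: "odd r" using odd_p r_eq by simp

lemma N_eq: "N = (r - 1) * (r + 1)"
  using r_ge_3 by (simp add: N_def power2_eq_square algebra_simps)

lemma N_pos: "N > 0" using r_ge_3 by (simp add: N_eq)

lemma card_eq_Suc_N: "CARD('a) = N + 1" using card_eq r_ge_3 by (simp add: N_def)

lemma eight_dvd_N: "8 dvd N"
proof -
  obtain j where "r = 2 * j + 1" using odd_r oddE by blast
  then have "N = 4 * (j * (j + 1))" unfolding N_eq by (simp add: algebra_simps)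
  moreover obtain t where "j * (j + 1) = 2 * t" by (metis evenE even_mult_iff odd_even_add odd_one)
  ultimately have "N = 8 * t" by simp
  then show ?thesis by simp
qed

lemma even_N: "even N" using eight_dvd_N by (auto elim!: dvdE)

lemma half_N_eq: "N div 2 = (r - 1) * ((r + 1) div 2)"
  using odd_r by (auto simp: N_eq elim!: oddE)

lemma power_N_eq_1: assumes "x \<noteq> 0" shows "x ^ N = (1::'a)"
proof -
  have "card (UNIV - {0::'a}) = N" using card_eq_Suc_N by (simp add: card_Diff_singleton)
  then have "(\<Prod>y\<in>UNIV-{0}. x * y) = x ^ N * (\<Prod>y\<in>UNIV-{0::'a}. y)"
    by (simp add: prod.distrib)
  moreover have "(\<Prod>y\<in>UNIV-{0}. x * y) = (\<Prod>y\<in>UNIV-{0::'a}. y)"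
    by (rule prod.reindex_bij_witness[of _ "\<lambda>y. y / x" "\<lambda>y. x * y"]) (use assms in auto)
  moreover have "(\<Prod>y\<in>UNIV-{0::'a}. y) \<noteq> 0" by simp
  ultimately show ?thesis by simp
qed

lemma w_nonzero: "w \<noteq> 0"
proof
  assume "w = 0"
  then have "UNIV \<subseteq> {0::'a, 1}" using w_generates by (metis insertCI power_0_left subsetI)
  then have "CARD('a) \<le> card {0::'a, 1}" by (intro card_mono) auto
  also have "\<dots> \<le> 2" by (simp add: card_insert_le_m1)
  finally show False using card_eq_Suc_N eight_dvd_N N_pos by (auto dest: dvd_imp_le)
qed

lemma w_power_N_mult: "w ^ (N * c) = 1"
  by (simp add: power_mult power_N_eq_1[OF w_nonzero])

lemma w_power_mod: "w ^ i = w ^ (i mod N)"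
proof -
  have "w ^ i = w ^ (N * (i div N) + i mod N)" by simp
  also have "\<dots> = w ^ (i mod N)" by (simp only: power_add w_power_N_mult) simp
  finally show ?thesis .
qed

lemma w_power_eq_w_power_mod: "x = N * c + y \<Longrightarrow> w ^ x = w ^ y"
  by (simp add: power_add w_power_N_mult)

lemma inj_on_w_power: "inj_on (\<lambda>i. w ^ i) {..<N}"
proof (rule eq_card_imp_inj_on)
  have "(\<lambda>i. w ^ i) ` {..<N} = UNIV - {0}"
  proof
    show "(\<lambda>i. w ^ i) ` {..<N} \<subseteq> UNIV - {0}" using w_nonzero by auto
    show "UNIV - {0} \<subseteq> (\<lambda>i. w ^ i) ` {..<N}"
    proof
      fix x assume "x \<in> UNIV - {0::'a}"
      then obtain i where "x = w ^ (i mod N)" using w_generates w_power_mod by auto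
      then show "x \<in> (\<lambda>i. w ^ i) ` {..<N}" using N_pos by auto
    qed
  qed
  then show "card ((\<lambda>i. w ^ i) ` {..<N}) = card {..<N}"
    using card_eq_Suc_N by (simp add: card_Diff_singleton)
qed simp

lemma w_power_eq_iff: "w ^ i = w ^ j \<longleftrightarrow> i mod N = j mod N"
proof
  assume "w ^ i = w ^ j"
  then have "w ^ (i mod N) = w ^ (j mod N)" using w_power_mod by metis
  then show "i mod N = j mod N" using inj_on_w_power N_pos by (auto simp: inj_on_def)
qed (metis w_power_mod)

lemma w_power_eq_1_iff: "w ^ i = 1 \<longleftrightarrow> N dvd i"
  using w_power_eq_iff[of i 0] by (simp add: dvd_eq_mod_eq_0)

lemma w_power_half_N: "w ^ (N div 2) = -1"
proof -
  have "(w ^ (N div 2)) ^ 2 = 1" using even_N w_power_N_mult[of 1] by (simp flip: power_mult)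
  then have "w ^ (N div 2) = 1 \<or> w ^ (N div 2) = -1" by (simp add: power2_eq_1_iff)
  moreover have "\<not> N dvd N div 2" using N_pos even_N by (auto elim!: evenE dest: dvd_imp_le)
  ultimately show ?thesis using w_power_eq_1_iff by auto
qed

lemma eta_mult: "eta (x * y) = eta x * eta y"
  by (simp add: eta_def power_mult_distrib)

lemma eta_prod: "eta (\<Prod>i\<in>I. f i) = (\<Prod>i\<in>I. eta (f i))"
  by (simp add: eta_def prod_power_distrib)

lemma eta_power: "eta (x ^ k) = eta x ^ k"
  by (simp add: eta_def flip: power_mult) (simp add: mult.commute)

lemma square_if_eta_eq_1:
  assumes "x \<noteq> 0" "eta x = 1"
  shows "\<exists>y. y \<noteq> 0 \<and> y ^ 2 = x"
proof -
  obtain i where i: "x = w ^ i" using w_generates assms(1) by auto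
  then have "w ^ (i * (N div 2)) = 1" using assms(2) by (simp add: eta_def power_mult)
  then have "N dvd i * (N div 2)" using w_power_eq_1_iff by simp
  then have "(N div 2) * 2 dvd (N div 2) * i" using even_N by (simp add: mult.commute)
  moreover have "N div 2 > 0" using N_pos even_N by (auto elim!: evenE)
  ultimately have "even i" by (simp add: nat_mult_dvd_cancel_disj)
  then obtain j where "i = 2 * j" by auto
  then show ?thesis using i w_nonzero by (intro exI[of _ "w ^ j"]) (simp add: power_mult[symmetric] mult.commute)
qed

lemma eta_cases: assumes "x \<noteq> 0" shows "eta x = 1 \<or> eta x = -1"
proof -
  have "eta x ^ 2 = 1" using even_N power_N_eq_1[OF assms] by (simp add: eta_def flip: power_mult)
  then show ?thesis by (simp add: power2_eq_1_iff)
qed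

lemma eta_square: assumes "x \<noteq> 0" shows "eta x * eta x = 1"
  using eta_cases[OF assms] by auto

lemma eta_minus_one: "eta (-1) = 1"
proof -
  have "even (N div 2)" using eight_dvd_N by (auto elim!: dvdE)
  then show ?thesis by (simp add: eta_def)
qed

lemma eta_uminus: "eta (- x) = eta x"
  using eta_mult[of "-1" x] eta_minus_one by simp

lemma eta_inverse: assumes "x \<noteq> 0" shows "eta (inverse x) = eta x"
proof -
  have "eta (inverse x) * eta x = 1" using assms by (simp add: eta_def flip: eta_mult power_mult_distrib)
  then show ?thesis using eta_cases[OF assms] by (auto simp: minus_equation_iff)
qed

lemma eta_w_even_power: "eta (w ^ (2 * i)) = 1"
proof -
  have "2 * (N div 2) = N" using even_N by simp
  then have "2 * i * (N div 2) = N * i" by (metis mult.assoc mult.commute)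
  then show ?thesis unfolding eta_def power_mult[symmetric] by (simp only: w_power_N_mult)
qed

lemma CHAR_eq: "CHAR('a) = p"
proof -
  have prime: "prime CHAR('a)" by (rule prime_CHAR_semidom[OF finite_imp_CHAR_pos]) simp
  have "CHAR('a) dvd p ^ (m * 2)" using CHAR_dvd_CARD[where ?'a = 'a] card_eq r_eq by (simp add: power_mult)
  then have "CHAR('a) dvd p" using prime prime_dvd_power by blast
  then show ?thesis using prime prime_p by (simp add: primes_dvd_imp_eq)
qed

lemma frobenius_add: "(x + y :: 'a) ^ r = x ^ r + y ^ r"
  by (rule freshmans_dream') (auto simp: CHAR_eq prime_p r_eq)

lemma frobenius_diff: "(x - y :: 'a) ^ r = x ^ r - y ^ r"
  using frobenius_add[of "x - y" y] by (simp add: algebra_simps)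

lemma frobenius_of_nat: "(of_nat n :: 'a) ^ r = of_nat n"
proof (induction n)
  case 0 then show ?case using r_ge_3 by simp
next
  case (Suc n) then show ?case using frobenius_add[of "of_nat n" 1] by (simp add: add.commute)
qed

text \<open>Elements fixed by the Frobenius map lie in the subfield of order \<open>r\<close>, and
  \<open>(r - 1) dvd (N div 2)\<close>.\<close>

lemma eta_eq_1_if_frobenius_fixed:
  assumes "x \<noteq> 0" "x ^ r = x"
  shows "eta x = 1"
proof -
  have "x ^ (r - 1) * x = x ^ r" using r_ge_3 by (simp flip: power_Suc2)
  then have "x ^ (r - 1) = 1" using assms by simp
  then show ?thesis by (simp add: eta_def half_N_eq power_mult)
qed

lemma eta_diff_frobenius_fixed: "y ^ r = y \<Longrightarrow> z ^ r = z \<Longrightarrow> y \<noteq> z \<Longrightarrow> eta (y - z) = 1"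
  by (intro eta_eq_1_if_frobenius_fixed) (simp_all add: frobenius_diff)

lemma eta_of_nat:
  assumes "d dvd N"
  shows "eta (of_nat d) = 1"
proof (rule eta_eq_1_if_frobenius_fixed[OF _ frobenius_of_nat])
  have "\<not> p dvd N"
  proof
    assume "p dvd N"
    moreover have "p dvd r ^ 2" using r_eq m_pos by (simp add: power_mult[symmetric])
    moreover have "r ^ 2 = N + 1" using r_ge_3 by (simp add: N_def)
    ultimately have "p dvd 1" by (metis dvd_add_right_iff)
    then show False using prime_p by simp
  qed
  then show "(of_nat d :: 'a) \<noteq> 0" using assms by (auto simp: of_nat_eq_0_iff_char_dvd CHAR_eq dest: dvd_trans)
qed

lemma eta_diff_norm_one:
  assumes y: "y ^ (r + 1) = 1" and z: "z ^ (r + 1) = 1" and "y \<noteq> z"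
  shows "eta (y - z) * (y * z) ^ ((r + 1) div 2) = (-1) ^ ((r + 1) div 2)"
proof -
  \<comment> \<open>\<open>y ^ r = 1 / y\<close> and \<open>z ^ r = 1 / z\<close>, so \<open>(y - z) ^ r = - (y - z) / (y * z)\<close>\<close>
  have "(y - z) ^ r * (y * z) = (y ^ r * y) * z - (z ^ r * z) * y"
    by (simp add: frobenius_diff algebra_simps)
  also have "\<dots> = - (y - z)" using y z by (simp flip: power_Suc2)
  finally have "(y - z) ^ (r - 1) * (y - z) * (y * z) = - (y - z)"
    using r_ge_3 by (simp flip: power_Suc2)
  then have "((y - z) ^ (r - 1) * (y * z) + 1) * (y - z) = 0" by (simp add: algebra_simps)
  then have "(y - z) ^ (r - 1) * (y * z) = -1" using \<open>y \<noteq> z\<close> by (simp add: eq_neg_iff_add_eq_0)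
  then show ?thesis
    by (simp add: eta_def half_N_eq power_mult power_mult_distrib flip: power_mult_distrib)
qed

theorem MDS_self_dual_if_eta_diff_prod:
  assumes fin: "finite S" and "card S = n" "even n" "n \<ge> 2" and lam: "lam \<noteq> 0"
    and eta_S: "\<And>s. s \<in> S \<Longrightarrow> eta (lam * diff_prod S s) = 1"
  shows "\<exists>C :: (nat \<Rightarrow> 'a) set. MDS_self_dual n C"
proof (rule MDS_self_dual_if_diff_prods_square[OF assms(1-5)])
  fix s assume "s \<in> S"
  moreover have "diff_prod S s \<noteq> 0" using fin by (simp add: prod_zero_iff)
  ultimately show "\<exists>y. y \<noteq> 0 \<and> y ^ 2 = lam * diff_prod S s"
    using square_if_eta_eq_1 eta_S lam by simp
qed

lemma eta_diff_prod_insert_zero: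
  assumes fin: "finite A" and "0 \<notin> A" and eta_A: "\<And>a. a \<in> A \<Longrightarrow> eta a = 1"
    and eta_diff_A: "\<And>a. a \<in> A \<Longrightarrow> eta (diff_prod A a) = 1"
    and "b \<in> insert 0 A"
  shows "eta (diff_prod (insert 0 A) b) = 1"
proof (cases "b = 0")
  case True
  then have "diff_prod (insert 0 A) b = (\<Prod>a\<in>A. - a)" using \<open>0 \<notin> A\<close> by simp
  then show ?thesis using eta_A by (simp add: eta_prod eta_uminus)
next
  case False
  then have "b \<in> A" and "insert 0 A - {b} = insert 0 (A - {b})" using assms(5) by auto
  then have "diff_prod (insert 0 A) b = b * diff_prod A b" using fin \<open>0 \<notin> A\<close> by simp
  then show ?thesis using eta_A eta_diff_A \<open>b \<in> A\<close> by (simp add: eta_mult)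
qed

lemma eta_inverse_diff:
  assumes "b \<noteq> c" "b' \<noteq> c"
  shows "eta (inverse (b - c) - inverse (b' - c)) = eta (b - b') * eta (b - c) * eta (b' - c)"
proof -
  have bc: "b - c \<noteq> 0" and b'c: "b' - c \<noteq> 0" using assms by auto
  then have "inverse (b - c) - inverse (b' - c) = (-1) * (b - b') * inverse (b - c) * inverse (b' - c)"
    by (simp add: field_simps)
  then show ?thesis
    by (simp only: eta_mult eta_inverse[OF bc] eta_inverse[OF b'c] eta_minus_one mult_1_left)
qed

text \<open>The map \<open>x \<mapsto> 1/(x - c)\<close> multiplies \<open>diff_prod B b\<close> by a square times the common factor
  \<open>\<Prod>b\<in>B. b - c\<close> (odd cardinality makes the exponents even), and the new point \<open>0\<close>
  is the image of \<open>c\<close>.\<close>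

lemma eta_diff_prod_moebius:
  fixes c :: 'a
  defines "phi \<equiv> \<lambda>b. inverse (b - c)"
  assumes fin: "finite B" and odd: "odd (card B)" and c: "c \<notin> B"
    and eta_B: "\<And>b. b \<in> B \<Longrightarrow> eta (diff_prod B b) = 1"
    and t: "t \<in> insert 0 (phi ` B)"
  shows "eta (diff_prod (insert 0 (phi ` B)) t) = eta (\<Prod>b\<in>B. b - c)"
proof -
  have inj_phi: "inj_on phi B" by (auto simp: inj_on_def phi_def)
  have zero_notin: "0 \<notin> phi ` B" using c by (auto simp: phi_def)
  show ?thesis
  proof (cases "t = 0")
    case True
    then have "diff_prod (insert 0 (phi ` B)) t = (\<Prod>b\<in>B. (-1) * phi b)"
      using zero_notin inj_phi by (simp add: prod.reindex)
    then show ?thesis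
      using c by (auto simp: eta_prod eta_uminus phi_def intro!: prod.cong eta_inverse)
  next
    case False
    then obtain b where b: "b \<in> B" "t = phi b" using t by auto
    have bc: "b - c \<noteq> 0" using b c by auto
    have "insert 0 (phi ` B) - {t} = insert 0 (phi ` (B - {b}))" using b inj_phi False
      by (auto simp: inj_on_def)
    moreover have "0 \<notin> phi ` (B - {b})" using zero_notin by blast
    ultimately have "diff_prod (insert 0 (phi ` B)) t = t * (\<Prod>b'\<in>B - {b}. phi b - phi b')"
      using b fin inj_on_subset[OF inj_phi] by (simp add: prod.reindex)
    moreover have "eta (phi b - phi b') = eta (b - b') * eta (b - c) * eta (b' - c)"
      if "b' \<in> B - {b}" for b'
    proof -
      have "b \<noteq> c" "b' \<noteq> c" using b(1) that c by auto
      then show ?thesis by (simp add: phi_def eta_inverse_diff)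
    qed
    ultimately have "eta (diff_prod (insert 0 (phi ` B)) t)
        = eta (phi b) * (\<Prod>b'\<in>B - {b}. eta (b - b') * eta (b - c) * eta (b' - c))"
      using b by (simp add: eta_mult eta_prod)
    also have "\<dots> = eta (b - c) * eta (diff_prod B b) * eta (b - c) ^ (card B - 1)
        * (\<Prod>b'\<in>B - {b}. eta (b' - c))"
      using fin b bc by (simp add: prod.distrib eta_prod card_Diff_singleton phi_def eta_inverse)
    also have "eta (b - c) ^ (card B - 1) = 1"
      using odd eta_square[OF bc] by (auto simp: power_mult power2_eq_square elim!: oddE)
    also have "eta (b - c) * eta (diff_prod B b) * 1 * (\<Prod>b'\<in>B - {b}. eta (b' - c))
        = eta (\<Prod>b\<in>B. b - c)"
      using fin b eta_B by (simp add: eta_prod prod.remove[of B b "\<lambda>b'. eta (b' - c)"])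
    finally show ?thesis .
  qed
qed

lemma moebius_extension:
  assumes fin: "finite B" and "odd (card B)" and c: "c \<notin> B"
    and "\<And>b. b \<in> B \<Longrightarrow> eta (diff_prod B b) = 1"
  obtains T lam where "finite T" "card T = card B + 1" "lam \<noteq> 0"
    "\<And>t. t \<in> T \<Longrightarrow> eta (lam * diff_prod T t) = 1"
proof -
  define T where "T = insert 0 ((\<lambda>b. inverse (b - c)) ` B)"
  define K where "K = (\<Prod>b\<in>B. b - c)"
  have K: "K \<noteq> 0" using c fin by (auto simp: K_def prod_zero_iff)
  have eta_T: "eta (K * diff_prod T t) = 1" if "t \<in> T" for t
    using eta_diff_prod_moebius[OF assms that[unfolded T_def]] eta_square[OF K]
    by (simp add: T_def K_def eta_mult)
  have "inj_on (\<lambda>b. inverse (b - c)) B" by (auto simp: inj_on_def)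
  moreover have "0 \<notin> (\<lambda>b. inverse (b - c)) ` B" using c by auto
  ultimately have "card T = card B + 1" using fin by (simp add: T_def card_image)
  then show ?thesis using that[of T K] eta_T fin K by (simp add: T_def)
qed

definition coset :: "nat \<Rightarrow> nat \<Rightarrow> nat \<Rightarrow> 'a set" where
  "coset e f j = (\<lambda>h. w ^ (j + e * h)) ` {..<f}"

lemma finite_coset: "finite (coset e f j)"
  by (simp add: coset_def)

lemma zero_notin_coset: "0 \<notin> coset e f j"
  using w_nonzero by (auto simp: coset_def)

lemma card_coset:
  assumes "e * f = N"
  shows "card (coset e f j) = f"
proof -
  have "inj_on (\<lambda>h. w ^ (j + e * h)) {..<f}"
  proof
    fix h h' assume "h \<in> {..<f}" "h' \<in> {..<f}" "w ^ (j + e * h) = w ^ (j + e * h')"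
    then have "[j + e * h = j + e * h'] (mod N)" by (simp add: w_power_eq_iff cong_def)
    then have "[e * h = e * h'] (mod N)" by (simp add: cong_add_lcancel_nat)
    then have "e * (h mod f) = e * (h' mod f)" using assms by (simp add: cong_def mult_mod_right)
    moreover have "e > 0" using assms N_pos by (cases e) auto
    ultimately show "h = h'" using \<open>h \<in> {..<f}\<close> \<open>h' \<in> {..<f}\<close> by simp
  qed
  then show ?thesis by (simp add: coset_def card_image)
qed

lemma coset_index_mod_eq:
  assumes "b \<in> coset e f j" "b \<in> coset e' f' j'" "d dvd e" "d dvd e'" "d dvd N"
  shows "j mod d = j' mod d"
proof -
  obtain h h' where "w ^ (j + e * h) = w ^ (j' + e' * h')" using assms(1,2) by (auto simp: coset_def)
  then have "(j + e * h) mod N mod d = (j' + e' * h') mod N mod d" using w_power_eq_iff by simp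
  then have "(j + e * h) mod d = (j' + e' * h') mod d" using assms(5) by (simp add: mod_mod_cancel)
  then show ?thesis using assms(3,4) by (auto elim!: dvdE simp: mult.assoc)
qed

lemma prod_coset_linear:
  assumes ef: "e * f = N"
  shows "(\<Prod>b\<in>coset e f j. [:- b, 1:]) = monom 1 f - [:w ^ (j * f):]"
proof (rule poly_eqI_degree_lead_coeff[of _ f _ "coset e f j"])
  have f: "f > 0" using ef N_pos by (cases f) auto
  have "degree (\<Prod>b\<in>coset e f j. [:- b, 1:]) = f"
    using card_coset[OF ef] by (subst degree_prod_eq_sum_degree) (auto simp: finite_coset)
  then show "coeff (\<Prod>b\<in>coset e f j. [:- b, 1:]) f = coeff (monom 1 f - [:w ^ (j * f):]) f"
    "degree (\<Prod>b\<in>coset e f j. [:- b, 1:]) \<le> f"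
    using lead_coeff_prod[of "\<lambda>b. [:- b, 1:]" "coset e f j"] f
    by (auto simp: coeff_pCons split: nat.split)
  show "degree (monom 1 f - [:w ^ (j * f):]) \<le> f"
    by (rule order.trans[OF degree_diff_le_max]) (auto simp: degree_monom_le)
  show "card (coset e f j) \<ge> f" using card_coset[OF ef] by simp
  fix b assume b: "b \<in> coset e f j"
  then obtain h where h: "b = w ^ (j + e * h)" by (auto simp: coset_def)
  have "(j + e * h) * f = N * h + j * f" using ef by (simp add: algebra_simps)
  then have "b ^ f = w ^ (j * f)" using h by (simp add: power_mult[symmetric] w_power_eq_w_power_mod)
  moreover have "poly (\<Prod>b\<in>coset e f j. [:- b, 1:]) b = 0"
    using b finite_coset by (auto simp: poly_prod intro!: prod_zero)
  ultimately show "poly (\<Prod>b\<in>coset e f j. [:- b, 1:]) b = poly (monom 1 f - [:w ^ (j * f):]) b"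
    by (simp add: poly_monom)
qed

lemma prod_coset:
  assumes "e * f = N"
  shows "(\<Prod>b\<in>coset e f j. x - b) = x ^ f - w ^ (j * f)"
  using arg_cong[OF prod_coset_linear[OF assms], of "\<lambda>P. poly P x"] by (simp add: poly_prod poly_monom)

lemma diff_prod_coset:
  assumes "e * f = N" "a \<in> coset e f j"
  shows "diff_prod (coset e f j) a = of_nat f * a ^ (f - 1)"
  using poly_pderiv_prod_at_root[OF finite_coset assms(2)]
  by (simp add: prod_coset_linear[OF assms(1)] pderiv_diff pderiv_monom poly_monom pderiv_pCons)

end

section \<open>The evaluation set\<close>

text \<open>The parameters of the theorem in factored form: \<open>gcd e1 e2 = g = 2 g2\<close>, \<open>e1 = g D1\<close>,
  \<open>e2 = g D2\<close>, \<open>r + 1 = 2 D1 R1\<close>, \<open>r - 1 = 2 D2 R2\<close>, so that \<open>N = 4 D1 D2 R1 R2\<close>.\<close>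

locale coset_union = square_order_field p m r w for p m r :: nat and w :: "'a::{finite,field}" +
  fixes g2 D1 D2 R1 R2 f1 f2 s t :: nat
  assumes r_plus_1: "r + 1 = 2 * D1 * R1" and r_minus_1: "r - 1 = 2 * D2 * R2"
    and even_g2: "even g2" and g2_pos: "g2 > 0" and odd_D1: "odd D1"
    and g2_f1: "g2 * f1 = 2 * D2 * R1 * R2" and g2_f2: "g2 * f2 = 2 * D1 * R1 * R2"
    and s_pos: "1 \<le> s" and s_le: "s \<le> D1" and t_pos: "1 \<le> t" and t_le: "t \<le> D2"
    and even_s_R1: "even ((s - 1) * R1)"
begin

definition "g = 2 * g2"
definition "e1 = g * D1"
definition "e2 = g * D2"

lemma N_eq_D_R: "N = 4 * D1 * D2 * R1 * R2"
proof -
  have "N = (r - 1) * (r + 1)" by (rule N_eq)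
  also have "\<dots> = (2 * D2 * R2) * (2 * D1 * R1)" by (simp only: r_plus_1 r_minus_1)
  finally show ?thesis by (simp add: algebra_simps)
qed

lemma e1_f1: "e1 * f1 = N"
proof -
  have "e1 * f1 = 2 * D1 * (g2 * f1)" by (simp add: e1_def g_def algebra_simps)
  then show ?thesis by (simp add: g2_f1 N_eq_D_R)
qed

lemma e2_f2: "e2 * f2 = N"
proof -
  have "e2 * f2 = 2 * D2 * (g2 * f2)" by (simp add: e2_def g_def algebra_simps)
  then show ?thesis by (simp add: g2_f2 N_eq_D_R)
qed

lemma half_r_plus_1: "(r + 1) div 2 = D1 * R1" using r_plus_1 by simp

text \<open>\<open>f1\<close>-th powers of points of the evaluation set lie in \<open>\<langle>u\<rangle>\<close>, inside the norm-one group
  of order \<open>r + 1\<close>; \<open>f2\<close>-th powers lie in \<open>\<langle>v\<rangle>\<close>, inside the multiplicative group of the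
  subfield of order \<open>r\<close>.\<close>

definition "u = w ^ (2 * D2 * R1 * R2)"
definition "v = w ^ (2 * D1 * R1 * R2)"

lemma u_power_norm_one: "(u ^ i) ^ (r + 1) = 1"
proof -
  have "(u ^ i) ^ (r + 1) = (u ^ i) ^ (2 * D1 * R1)" by (simp only: r_plus_1)
  also have "\<dots> = w ^ (2 * D2 * R1 * R2 * i * (2 * D1 * R1))" by (simp only: u_def power_mult)
  also have "2 * D2 * R1 * R2 * i * (2 * D1 * R1) = N * (R1 * i)" by (simp add: N_eq_D_R algebra_simps)
  finally show ?thesis by (simp add: w_power_N_mult)
qed

lemma u_power_half: "u ^ (D1 * R1) = (-1) ^ R1"
proof -
  have "u ^ (D1 * R1) = w ^ (2 * D2 * R1 * R2 * (D1 * R1))" by (simp only: u_def power_mult)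
  also have "2 * D2 * R1 * R2 * (D1 * R1) = (N div 2) * R1" by (simp add: N_eq_D_R algebra_simps)
  finally show ?thesis by (simp add: w_power_half_N power_mult)
qed

lemma v_power_frobenius: "(v ^ i) ^ r = v ^ i"
proof -
  have "r = 1 + (r - 1)" using r_ge_3 by simp
  then have "(v ^ i) ^ r = v ^ i * (v ^ i) ^ (r - 1)" by (metis power_add power_one_right)
  also have "(v ^ i) ^ (r - 1) = (v ^ i) ^ (2 * D2 * R2)" by (simp only: r_minus_1)
  also have "\<dots> = w ^ (2 * D1 * R1 * R2 * i * (2 * D2 * R2))" by (simp only: v_def power_mult)
  also have "2 * D1 * R1 * R2 * i * (2 * D2 * R2) = N * (R2 * i)" by (simp add: N_eq_D_R algebra_simps)
  finally show ?thesis by (simp add: w_power_N_mult)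
qed

lemma g_pos: "g > 0" using g2_pos by (simp add: g_def)
lemma g2_lt: "g2 < g" using g2_pos by (simp add: g_def)
lemma e1_dvd_N: "e1 dvd N" using dvd_triv_left[of e1 f1] e1_f1 by simp
lemma e2_dvd_N: "e2 dvd N" using dvd_triv_left[of e2 f2] e2_f2 by simp
lemma g_dvd_N: "g dvd N" using e1_dvd_N dvd_trans[of g e1 N] by (simp add: e1_def)

text \<open>The evaluation set is the union of \<open>s\<close> cosets of the subgroup of index \<open>e1\<close> and \<open>t\<close> cosets
  of the subgroup of index \<open>e2\<close>; their representatives differ modulo \<open>g\<close>, which keeps them
  disjoint.\<close>

definition block :: "nat \<Rightarrow> 'a set" where
  "block k = (if k < s then coset e1 f1 (g * k) else coset e2 f2 (g2 + g * (k - s)))"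

definition eval_set :: "'a set" where "eval_set = (\<Union>k\<in>{..<s+t}. block k)"

lemma finite_block: "finite (block k)" by (simp add: block_def finite_coset)

lemma card_block: "card (block k) = (if k < s then f1 else f2)"
  by (simp add: block_def card_coset e1_f1 e2_f2)

lemma block_exponent_lt_e1: "k < s \<Longrightarrow> g * k < e1"
proof -
  assume "k < s"
  then have "k < D1" using s_le by simp
  then show "g * k < e1" using g_pos by (simp add: e1_def)
qed

lemma block_exponent_lt_e2: "k < t \<Longrightarrow> g2 + g * k < e2"
proof -
  assume "k < t"
  then have "k + 1 \<le> D2" using t_le by simp
  from mult_le_mono2[OF this, of g] have "g * k + g \<le> g * D2" by (simp only: distrib_left mult_1_right)
  then show "g2 + g * k < e2" using g2_lt unfolding e2_def by linarith
qed

lemma block_disjoint: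
  assumes k: "k < s + t" and k': "k' < s + t" and ne: "k \<noteq> k'"
  shows "block k \<inter> block k' = {}"
proof (rule ccontr)
  assume "block k \<inter> block k' \<noteq> {}"
  then obtain b where b: "b \<in> block k" "b \<in> block k'" by auto
  have ge1: "g dvd e1" "g dvd e2" by (simp_all add: e1_def e2_def)
  have e1N: "e1 dvd N" "e2 dvd N" by (rule e1_dvd_N, rule e2_dvd_N)
  consider "k < s" "k' < s" | "k < s" "\<not> k' < s" | "\<not> k < s" "k' < s" | "\<not> k < s" "\<not> k' < s" by blast
  then show False
  proof cases
    case 1
    then have "(g * k) mod e1 = (g * k') mod e1" using b e1N
      by (intro coset_index_mod_eq[of b e1 f1 _ e1 f1]) (auto simp: block_def)
    then have "g * k = g * k'" using block_exponent_lt_e1 1 by simp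
    then show False using ne g_pos by simp
  next
    case 2
    then have "(g * k) mod g = (g2 + g * (k' - s)) mod g" using b ge1 g_dvd_N
      by (intro coset_index_mod_eq[of b e1 f1 _ e2 f2]) (auto simp: block_def)
    then show False using g2_lt g2_pos by simp
  next
    case 3
    then have "(g2 + g * (k - s)) mod g = (g * k') mod g" using b ge1 g_dvd_N
      by (intro coset_index_mod_eq[of b e2 f2 _ e1 f1]) (auto simp: block_def)
    then show False using g2_lt g2_pos by simp
  next
    case 4
    then have "(g2 + g * (k - s)) mod e2 = (g2 + g * (k' - s)) mod e2" using b e1N
      by (intro coset_index_mod_eq[of b e2 f2 _ e2 f2]) (auto simp: block_def)
    moreover have "k - s < t" "k' - s < t" using 4 k k' by auto
    ultimately have "g * (k - s) = g * (k' - s)" using block_exponent_lt_e2 by simp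
    then have "k - s = k' - s" using g_pos by simp
    then show False using ne 4 by simp
  qed
qed

lemma finite_eval_set: "finite eval_set" by (simp add: eval_set_def finite_block)

lemma card_eval_set: "card eval_set = s * f1 + t * f2"
proof -
  have "card eval_set = (\<Sum>k<s+t. card (block k))"
    unfolding eval_set_def by (rule card_UN_disjoint) (auto simp: finite_block block_disjoint)
  also have "\<dots> = (\<Sum>k<s+t. if k < s then f1 else f2)" by (simp add: card_block)
  also have "\<dots> = (\<Sum>k<s. f1) + (\<Sum>k\<in>{s..<s+t}. f2)"
  proof -
    have "{..<s+t} = {..<s} \<union> {s..<s+t}" by auto
    then have "(\<Sum>k<s+t. if k < s then f1 else f2) = (\<Sum>k<s. if k < s then f1 else f2) + (\<Sum>k\<in>{s..<s+t}. if k < s then f1 else f2)"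
      by (simp add: sum.union_disjoint ivl_disj_int)
    then show ?thesis by simp
  qed
  also have "\<dots> = s * f1 + t * f2" by simp
  finally show ?thesis .
qed

lemma zero_notin_eval_set: "0 \<notin> eval_set" using zero_notin_coset by (auto simp: eval_set_def block_def split: if_splits)

lemma w_power_f1: "(w ^ (g2 * y)) ^ f1 = u ^ y"
proof -
  have "g2 * y * f1 = 2 * D2 * R1 * R2 * y" using g2_f1 by (metis mult.commute mult.left_commute)
  then show ?thesis by (simp only: u_def flip: power_mult)
qed

lemma w_power_f2: "(w ^ (g2 * y)) ^ f2 = v ^ y"
proof -
  have "g2 * y * f2 = 2 * D1 * R1 * R2 * y" using g2_f2 by (metis mult.commute mult.left_commute)
  then show ?thesis by (simp only: v_def flip: power_mult)
qed

lemma block_elem: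
  assumes "a \<in> block k"
  obtains y where "a = w ^ (g2 * y)" "even y \<longleftrightarrow> k < s"
proof (cases "k < s")
  case True
  then obtain h where "a = w ^ (g * k + e1 * h)" using assms by (auto simp: block_def coset_def)
  moreover have "g * k + e1 * h = g2 * (2 * k + 2 * D1 * h)" by (simp add: g_def e1_def algebra_simps)
  ultimately show ?thesis using that[of "2 * k + 2 * D1 * h"] True by simp
next
  case False
  then obtain h where "a = w ^ (g2 + g * (k - s) + e2 * h)" using assms by (auto simp: block_def coset_def)
  moreover have "g2 + g * (k - s) + e2 * h = g2 * (1 + 2 * (k - s) + 2 * D2 * h)"
    by (simp add: g_def e2_def algebra_simps)
  ultimately show ?thesis using that[of "1 + 2 * (k - s) + 2 * D2 * h"] False by simp
qed

lemma eta_eval_set: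
  assumes "a \<in> eval_set"
  shows "eta a = 1"
proof -
  obtain k where "a \<in> block k" using assms by (auto simp: eval_set_def)
  then obtain y where "a = w ^ (g2 * y)" by (rule block_elem)
  moreover obtain c where "g2 = 2 * c" using even_g2 by blast
  ultimately show ?thesis by (simp add: mult.assoc eta_w_even_power)
qed

lemma prod_block:
  "(\<Prod>b\<in>block k. x - b) = (if k < s then x ^ f1 - u ^ (2 * k) else x ^ f2 - v ^ (1 + 2 * (k - s)))"
proof -
  have "g * k = g2 * (2 * k)" "g2 + g * (k - s) = g2 * (1 + 2 * (k - s))" by (simp_all add: g_def)
  then have "w ^ (g * k * f1) = u ^ (2 * k)" "w ^ ((g2 + g * (k - s)) * f2) = v ^ (1 + 2 * (k - s))"
    using w_power_f1 w_power_f2 by (metis power_mult)+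
  then show ?thesis by (simp add: block_def prod_coset e1_f1 e2_f2)
qed

lemma eta_diff_u_powers:
  assumes "u ^ i \<noteq> u ^ j"
  shows "eta (u ^ i - u ^ j) = (-1) ^ (R1 * (i + j + 1))"
proof -
  have "(u ^ i * u ^ j) ^ (D1 * R1) = (u ^ (D1 * R1)) ^ (i + j)"
    by (simp add: mult.commute flip: power_add power_mult)
  also have "\<dots> = (-1) ^ (R1 * (i + j))" unfolding u_power_half by (simp only: power_mult)
  finally have "eta (u ^ i - u ^ j) * (-1) ^ (R1 * (i + j)) = (-1) ^ (D1 * R1)"
    using eta_diff_norm_one[OF u_power_norm_one u_power_norm_one assms] by (simp only: half_r_plus_1)
  moreover have "(-1::'a) ^ (D1 * R1) = (-1) ^ R1" using odd_D1 by (simp add: minus_one_power_iff)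
  ultimately have "eta (u ^ i - u ^ j) * ((-1) ^ (R1 * (i + j)) * (-1) ^ (R1 * (i + j)))
      = (-1) ^ R1 * (-1) ^ (R1 * (i + j))"
    by (simp only: mult.assoc[symmetric])
  then have "eta (u ^ i - u ^ j) = (-1) ^ R1 * (-1) ^ (R1 * (i + j))" by (simp flip: power_add)
  then show ?thesis by (simp add: power_add algebra_simps)
qed

lemma eta_diff_v_powers: "v ^ i \<noteq> v ^ j \<Longrightarrow> eta (v ^ i - v ^ j) = 1"
  by (rule eta_diff_frobenius_fixed) (simp_all add: v_power_frobenius)

lemma eta_prod_block_diff:
  assumes "k0 < s + t" "a \<in> block k0" "k < s + t" "k \<noteq> k0"
  shows "eta (\<Prod>b\<in>block k. a - b) = (if k0 < s \<and> k < s then (-1) ^ R1 else 1)"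
proof -
  obtain y where a: "a = w ^ (g2 * y)" and y: "even y \<longleftrightarrow> k0 < s" using assms(2) by (rule block_elem)
  have "a \<notin> block k" using block_disjoint[OF assms(3,1,4)] assms(2) by blast
  then have nz: "(\<Prod>b\<in>block k. a - b) \<noteq> 0" using finite_block by (simp add: prod_zero_iff)
  show ?thesis
  proof (cases "k < s")
    case True
    then have "(\<Prod>b\<in>block k. a - b) = u ^ y - u ^ (2 * k)" by (simp add: prod_block a w_power_f1)
    moreover from this have "u ^ y \<noteq> u ^ (2 * k)" using nz by simp
    ultimately have "eta (\<Prod>b\<in>block k. a - b) = (-1) ^ (R1 * (y + 2 * k + 1))"
      by (simp add: eta_diff_u_powers)
    also have "\<dots> = (if k0 < s then (-1) ^ R1 else 1)"
      using y by (auto simp: minus_one_power_iff)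
    finally show ?thesis using True by simp
  next
    case False
    then have P: "(\<Prod>b\<in>block k. a - b) = v ^ y - v ^ (1 + 2 * (k - s))"
      by (simp add: prod_block a w_power_f2)
    then have "v ^ y \<noteq> v ^ (1 + 2 * (k - s))" using nz by simp
    then have "eta (\<Prod>b\<in>block k. a - b) = 1" unfolding P by (rule eta_diff_v_powers)
    then show ?thesis using False by simp
  qed
qed

text \<open>This is where \<open>4 dvd (s - 1) * (r + 1)\<close> enters: the \<open>s - 1\<close> other blocks of the first kind
  contribute the sign \<open>(-1) ^ (R1 * (s - 1)) = 1\<close>.\<close>

lemma eta_prod_other_blocks:
  assumes "k0 < s + t" "a \<in> block k0"
  shows "eta (\<Prod>k\<in>{..<s+t}-{k0}. \<Prod>b\<in>block k. a - b) = 1"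
proof -
  have "eta (\<Prod>k\<in>{..<s+t}-{k0}. \<Prod>b\<in>block k. a - b)
      = (\<Prod>k\<in>{..<s+t}-{k0}. if k0 < s \<and> k < s then (-1) ^ R1 else 1)"
    unfolding eta_prod[of "\<lambda>k. \<Prod>b\<in>block k. a - b"]
    using eta_prod_block_diff[OF assms] by (intro prod.cong) auto
  also have "\<dots> = (if k0 < s then ((-1) ^ R1) ^ (s - 1) else 1)"
  proof (cases "k0 < s")
    case True
    then have "({..<s+t}-{k0}) \<inter> {k. k < s} = {..<s} - {k0}" by auto
    then show ?thesis using True by (simp add: prod.If_cases card_Diff_singleton)
  qed simp
  also have "\<dots> = 1"
    using neg_one_even_power[OF even_s_R1, where ?'a = 'a] by (simp add: mult.commute power_mult)
  finally show ?thesis .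
qed

lemma eta_diff_prod_eval_set:
  assumes "a \<in> eval_set"
  shows "eta (diff_prod eval_set a) = 1"
proof -
  obtain k0 where k0: "k0 < s + t" "a \<in> block k0" using assms by (auto simp: eval_set_def)
  have "diff_prod eval_set a = diff_prod (block k0) a * (\<Prod>k\<in>{..<s+t}-{k0}. \<Prod>b\<in>block k. a - b)"
    unfolding eval_set_def by (rule diff_prod_UN_disjoint) (use k0 finite_block block_disjoint in auto)
  moreover have "eta (diff_prod (block k0) a) = 1"
  proof -
    obtain e f j where ef: "e * f = N" and "block k0 = coset e f j"
      using e1_f1 e2_f2 by (cases "k0 < s") (auto simp: block_def)
    then have "diff_prod (block k0) a = of_nat f * a ^ (f - 1)" using k0(2) diff_prod_coset by simp
    moreover have "f dvd N" using ef by (metis dvd_triv_right)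
    ultimately show ?thesis using eta_eval_set[OF assms] eta_of_nat by (simp add: eta_mult eta_power)
  qed
  ultimately show ?thesis using eta_prod_other_blocks[OF k0] by (simp add: eta_mult)
qed

lemma f1_pos: "f1 > 0" and f2_pos: "f2 > 0"
proof -
  have "R1 > 0" using r_plus_1 by (cases R1) auto
  moreover have "R2 > 0" using r_minus_1 r_ge_3 by (cases R2) auto
  moreover have "D1 > 0" "D2 > 0" using s_pos s_le t_pos t_le by auto
  ultimately have "2 * D2 * R1 * R2 > 0" "2 * D1 * R1 * R2 > 0" by simp_all
  then have "g2 * f1 > 0" "g2 * f2 > 0" unfolding g2_f1 g2_f2 .
  then show "f1 > 0" "f2 > 0" by simp_all
qed

lemma card_eval_set_bounds: "2 \<le> card eval_set" "2 * card eval_set \<le> N"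
proof -
  show "2 \<le> card eval_set"
  proof -
    have "1 \<le> s * f1" "1 \<le> t * f2" using s_pos t_pos f1_pos f2_pos by simp_all
    then have "2 \<le> s * f1 + t * f2" by linarith
    then show ?thesis by (simp add: card_eval_set)
  qed
  have "g2 \<ge> 2" using even_g2 g2_pos by (auto elim!: evenE)
  then have "2 * 2 * s \<le> 2 * g2 * D1" "2 * 2 * t \<le> 2 * g2 * D2"
    using s_le t_le by (simp_all add: mult_le_mono)
  then have "4 * (s * f1) \<le> e1 * f1" "4 * (t * f2) \<le> e2 * f2"
    unfolding e1_def e2_def g_def by (simp_all add: mult.assoc[symmetric])
  then show "2 * card eval_set \<le> N" using e1_f1 e2_f2 by (simp add: card_eval_set)
qed

theorem MDS_self_dual_eval_set:
  assumes "even (s * f1 + t * f2)"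
  shows "\<exists>C :: (nat \<Rightarrow> 'a) set. MDS_self_dual (s * f1 + t * f2) C"
  using MDS_self_dual_if_eta_diff_prod[OF finite_eval_set card_eval_set assms _ one_neq_zero]
    card_eval_set_bounds eta_diff_prod_eval_set by (simp add: card_eval_set)

theorem MDS_self_dual_eval_set_insert_zero:
  assumes "odd (s * f1 + t * f2)"
  shows "\<exists>C :: (nat \<Rightarrow> 'a) set. MDS_self_dual (s * f1 + t * f2 + 1) C"
proof (rule MDS_self_dual_if_eta_diff_prod[of "insert 0 eval_set" _ 1])
  show "card (insert 0 eval_set) = s * f1 + t * f2 + 1"
    using finite_eval_set zero_notin_eval_set by (simp add: card_eval_set)
  show "eta (1 * diff_prod (insert 0 eval_set) b) = 1" if "b \<in> insert 0 eval_set" for b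
    using eta_diff_prod_insert_zero[OF finite_eval_set zero_notin_eval_set eta_eval_set
        eta_diff_prod_eval_set that] by simp
qed (use assms card_eval_set_bounds finite_eval_set in \<open>auto simp: card_eval_set\<close>)

theorem MDS_self_dual_eval_set_moebius:
  assumes "even (s * f1 + t * f2)"
  shows "\<exists>C :: (nat \<Rightarrow> 'a) set. MDS_self_dual (s * f1 + t * f2 + 2) C"
proof -
  let ?B = "insert 0 eval_set"
  have card_B: "card ?B = s * f1 + t * f2 + 1"
    using finite_eval_set zero_notin_eval_set by (simp add: card_eval_set)
  have "card ?B < CARD('a)" using card_B card_eval_set_bounds card_eq_Suc_N by (simp add: card_eval_set)
  have "\<not> UNIV \<subseteq> ?B"
  proof
    assume "UNIV \<subseteq> ?B"
    then have "CARD('a) \<le> card ?B" using finite_eval_set by (intro card_mono) auto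
    then show False using \<open>card ?B < CARD('a)\<close> by simp
  qed
  then obtain c :: 'a where "c \<notin> ?B" by blast
  moreover have "eta (diff_prod ?B b) = 1" if "b \<in> ?B" for b
    using eta_diff_prod_insert_zero[OF finite_eval_set zero_notin_eval_set eta_eval_set
        eta_diff_prod_eval_set that] .
  ultimately obtain T lam where "finite T" "card T = card ?B + 1" "lam \<noteq> 0"
    "\<And>t. t \<in> T \<Longrightarrow> eta (lam * diff_prod T t) = 1"
    using moebius_extension[of ?B c] finite_eval_set card_B assms by auto
  then show ?thesis
    using MDS_self_dual_if_eta_diff_prod[of T] card_B card_eval_set_bounds assms
    by (simp add: card_eval_set)
qed

end

section \<open>Deriving the parameters\<close>

lemma index_quotients:
  fixes r e1 e2 l :: nat
  assumes "odd r" "e1 > 0" "l \<ge> 2" and cong: "[e1 = 2 ^ l] (mod 2 ^ (l + 1))" and "2 ^ l dvd e2"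
    and h1: "2 * e2 dvd e1 * (r - 1)" and h2: "e1 dvd e2 * (r + 1)"
  shows "4 dvd gcd e1 e2" "odd (e1 div gcd e1 e2)"
    "2 * (e1 div gcd e1 e2) dvd r + 1" "2 * (e2 div gcd e1 e2) dvd r - 1"
proof -
  define g D1 D2 where "g = gcd e1 e2" and "D1 = e1 div g" and "D2 = e2 div g"
  have "g > 0" using assms(2) by (simp add: g_def)
  have e1: "e1 = g * D1" and e2: "e2 = g * D2" by (simp_all add: D1_def D2_def g_def)
  have coprime: "coprime D1 D2" unfolding D1_def D2_def g_def using assms(2) by (intro div_gcd_coprime) auto
  have mod: "e1 mod 2 ^ (l + 1) = 2 ^ l" using cong by (simp add: cong_def)
  have "e1 = 2 ^ l * (2 * (e1 div 2 ^ (l + 1)) + 1)"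
    using div_mult_mod_eq[of e1 "2 ^ (l + 1)"] mod by (simp add: algebra_simps)
  then have "2 ^ l dvd g" using assms(5) unfolding g_def by (metis dvd_triv_left gcd_greatest)
  moreover have "4 dvd (2::nat) ^ l" using assms(3) le_imp_power_dvd[of 2 l 2] by simp
  ultimately show "4 dvd gcd e1 e2" unfolding g_def using dvd_trans by blast
  have odd_D1: "odd D1"
  proof
    assume "even D1"
    then have "2 ^ l * 2 dvd g * D1" using \<open>2 ^ l dvd g\<close> by (intro mult_dvd_mono) auto
    then have "e1 mod 2 ^ (l + 1) = 0" using e1 by (simp add: mult.commute)
    then show False using mod by simp
  qed
  then show "odd (e1 div gcd e1 e2)" by (simp add: D1_def g_def)
  have "g * D1 dvd g * (D2 * (r + 1))" using h2 e1 e2 by (simp only: mult.assoc)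
  then have "D1 dvd D2 * (r + 1)" using \<open>g > 0\<close> by simp
  then have "D1 dvd r + 1" using coprime by (metis coprime_dvd_mult_right_iff)
  moreover have "coprime 2 D1" using odd_D1 by simp
  ultimately show "2 * (e1 div gcd e1 e2) dvd r + 1"
    using \<open>odd r\<close> by (simp add: D1_def g_def divides_mult)
  have "g * (2 * D2) dvd g * (D1 * (r - 1))" using h1 e1 e2 by (simp only: mult.assoc mult.left_commute)
  then have "2 * D2 dvd D1 * (r - 1)" using \<open>g > 0\<close> by simp
  moreover have "coprime (2 * D2) D1" using coprime odd_D1 by (simp add: coprime_commute)
  ultimately show "2 * (e2 div gcd e1 e2) dvd r - 1"
    by (simp add: D2_def g_def coprime_dvd_mult_right_iff)
qed

lemma (in square_order_field) coset_union_exists: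
  assumes "e1 > 0" "e2 > 0" "N = e1 * f1" "N = e2 * f2"
    and "l \<ge> 2" "[e1 = 2 ^ l] (mod 2 ^ (l + 1))" "2 ^ l dvd e2"
    and "2 * e2 dvd e1 * (r - 1)" "e1 dvd e2 * (r + 1)"
    and "1 \<le> s" "s \<le> e1 div gcd e1 e2" "1 \<le> t" "t \<le> e2 div gcd e1 e2"
    and "4 dvd (s - 1) * (r + 1)"
  obtains g2 D1 D2 R1 R2 where "coset_union p m r w g2 D1 D2 R1 R2 f1 f2 s t"
proof -
  define D1 D2 where "D1 = e1 div gcd e1 e2" and "D2 = e2 div gcd e1 e2"
  note quot = index_quotients[OF odd_r assms(1,5-9), folded D1_def D2_def]
  obtain k where "gcd e1 e2 = 4 * k" using quot(1) by blast
  then obtain g2 where g2: "gcd e1 e2 = 2 * g2" "even g2" by (intro that[of "2 * k"]) simp_all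
  obtain R1 where R1: "r + 1 = 2 * D1 * R1" using quot(3) by blast
  obtain R2 where R2: "r - 1 = 2 * D2 * R2" using quot(4) by blast
  have e: "e1 = 2 * g2 * D1" "e2 = 2 * g2 * D2" using g2(1) by (simp_all add: D1_def D2_def flip: g2(1))
  have N: "N = 2 * D1 * (2 * D2 * R1 * R2)" "N = 2 * D2 * (2 * D1 * R1 * R2)"
    using R1 R2 by (simp_all add: N_eq algebra_simps)
  have "D1 > 0" "D2 > 0" using assms(10-13) D1_def D2_def by auto
  have "(2 * D1) * (g2 * f1) = (2 * D1) * (2 * D2 * R1 * R2)" using N(1) assms(3) e(1)
    by (simp add: algebra_simps)
  then have "g2 * f1 = 2 * D2 * R1 * R2" using \<open>D1 > 0\<close> by (simp add: algebra_simps)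
  moreover have "(2 * D2) * (g2 * f2) = (2 * D2) * (2 * D1 * R1 * R2)" using N(2) assms(4) e(2)
    by (simp add: algebra_simps)
  then have "g2 * f2 = 2 * D1 * R1 * R2" using \<open>D2 > 0\<close> by (simp add: algebra_simps)
  moreover have "even ((s - 1) * R1)"
  proof -
    have "4 dvd (s - 1) * (2 * D1 * R1)" using assms(14) by (simp only: R1)
    moreover have "(s - 1) * (2 * D1 * R1) = 2 * ((s - 1) * D1 * R1)" by (simp add: algebra_simps)
    ultimately have "2 * 2 dvd 2 * ((s - 1) * D1 * R1)" by simp
    then have "2 dvd (s - 1) * D1 * R1" by (simp only: nat_mult_dvd_cancel_disj) simp
    then show ?thesis using quot(2) by (simp add: D1_def)
  qed
  moreover have "g2 > 0" using g2(1) assms(1) by (cases g2) auto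
  ultimately have "coset_union p m r w g2 D1 D2 R1 R2 f1 f2 s t"
    using R1 R2 g2 quot(2) assms(10-13)
    by (intro coset_union.intro coset_union_axioms.intro square_order_field_axioms)
      (simp_all add: D1_def D2_def)
  then show ?thesis by (rule that)
qed

theorem theorem1:
  fixes r p m e1 f1 e2 f2 l s t :: nat
  assumes "prime p" and "odd p" and "m \<ge> 1" and "r = p ^ m"
    and "CARD('a) = r ^ 2"
    and "e1 > 0" "f1 > 0" "e2 > 0" "f2 > 0"
    and "r ^ 2 - 1 = e1 * f1" and "r ^ 2 - 1 = e2 * f2"
    and "l \<ge> 2" and "[e1 = 2 ^ l] (mod 2 ^ (l + 1))" and "2 ^ l dvd e2"
    and "2 * e2 dvd e1 * (r - 1)" and "e1 dvd e2 * (r + 1)"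
    and "1 \<le> s" "s \<le> e1 div gcd e1 e2"
    and "1 \<le> t" "t \<le> e2 div gcd e1 e2"
    and "4 dvd (s - 1) * (r + 1)"
  shows "(even (s * f1 + t * f2) \<longrightarrow>
            (\<exists>C :: (nat \<Rightarrow> 'a::{finite,field}) set. MDS_self_dual (s * f1 + t * f2) C))
       \<and> (odd (s * f1 + t * f2) \<longrightarrow>
            (\<exists>C :: (nat \<Rightarrow> 'a) set. MDS_self_dual (s * f1 + t * f2 + 1) C))
       \<and> (even (s * f1 + t * f2) \<longrightarrow>
            (\<exists>C :: (nat \<Rightarrow> 'a) set. MDS_self_dual (s * f1 + t * f2 + 2) C))"
proof -
  obtain w :: 'a where "\<And>x. x \<noteq> 0 \<Longrightarrow> \<exists>i. x = w ^ i"
    using finite_field_mult_cyclic by blast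
  then interpret square_order_field p m r w
    using assms(1-5) by unfold_locales auto
  have "N = e1 * f1" "N = e2 * f2" using assms(10,11) by (simp_all add: N_def)
  then obtain g2 D1 D2 R1 R2 where "coset_union p m r w g2 D1 D2 R1 R2 f1 f2 s t"
    by (rule coset_union_exists[OF assms(6,8) _ _ assms(12-21)])
  then interpret coset_union p m r w g2 D1 D2 R1 R2 f1 f2 s t .
  show ?thesis
    using MDS_self_dual_eval_set MDS_self_dual_eval_set_insert_zero MDS_self_dual_eval_set_moebius
    by blast
qed

end
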